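(* Let $P_1,P_2,P_3$ be autarkic tuples with $P_1\subseteq P_2\subseteq P_3$. If $\mathrm{sep}(P_1)\cap\mathrm{sep}(P_3)\ne\emptyset$, then $\mathrm{sep}(P_2)\cap\mathrm{sep}(P_3)\ne\emptyset$.
   Context: Steiner Forest: finite undirected graph $G=(V,E)$, non-negative edge costs $(c_e)_{e\in E}$, set $\mathcal{D}$ of demand pairs $\{a,b\}\subseteq V$ (partners). For $U\subseteq V$, $\delta(U)$ is the set of edges with exactly one endpoint in $U$; $U$ separates $S$ if $S\cap U\ne\emptyset$ and $S\setminus U\ne\emptyset$; $\mathrm{sep}(U)$ is the set of demand pairs separated by $U$. The $\varepsilon$-extended moat-growing algorithm (fixed $\varepsilon\ge0$): time $t$ increases continuously from $0$ at unit rate; it maintains tight edges $F$ (initially empty), duals $y_S(t)\ge0$ (initially $0$), and budgets of components (initially $0$). $\mathcal{C}^t$ is the family of vertex sets of connected components of $(V,F)$. A component is demand-active if it contains a vertex not connected in $(V,F)$ to some partner; budget-active if not demand-active but with positive budget; active if either; $\mathcal{A}^t$ is the set of active components. Each $y_S$, $S\in\mathcal{A}^t$, grows at unit rate; budgets of demand-active components grow at rate $\varepsilon$ and of budget-active ones decrease at rate $1$; an edge $e$ with $\sum_{S:e\in\delta(S)}y_S(t)=c_e$ becomes tight and is added to $F$; merging components add budgets. $y_S=y_S(\infty)$. Autarkic pair: $P=\{A,B\}$ with $A,B\in\mathrm{supp}(y)$ disjoint, both in $\mathcal{A}^t$ for some $t$, $\mathrm{sep}(A)=\mathrm{sep}(B)\ne\emptyset$;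 $\mathrm{sep}(P)=\mathrm{sep}(A)$. Autarkic triple: $P=\{A_1,A_2,A_3\}$ pairwise disjoint, all in $\mathcal{A}^t$ for some $t$, each $\mathrm{sep}(A_i)\ne\emptyset$, $\mathrm{sep}(A_1\cup A_2\cup A_3)=\emptyset$; $\mathrm{sep}(P)=\bigcup_i\mathrm{sep}(A_i)$. Autarkic tuples are autarkic pairs and triples. For autarkic tuples $P$ (with sets $A_i$) and $Q$ (with sets $B_j$), $P\subseteq Q$ means every $A_i$ is contained in some $B_j$. *)

theory Defs
  imports Complex_Main
begin

text \<open>Vertices have type 'v; an edge is a two-element vertex set; demand pairs are
  vertex sets {a,b}.\<close>

definition delta :: "'v set set \<Rightarrow> 'v set \<Rightarrow> 'v set set" where
  "delta E U = {e \<in> E. e \<inter> U \<noteq> {} \<and> e - U \<noteq> {}}"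

definition separates :: "'v set \<Rightarrow> 'v set \<Rightarrow> bool" where
  "separates U S \<longleftrightarrow> S \<inter> U \<noteq> {} \<and> S - U \<noteq> {}"

definition sep :: "'v set set \<Rightarrow> 'v set \<Rightarrow> 'v set set" where
  "sep D U = {S \<in> D. separates U S}"

definition edge_rel :: "'v set set \<Rightarrow> ('v \<times> 'v) set" where
  "edge_rel F = {(u, v). {u, v} \<in> F}"

definition connected_in :: "'v set set \<Rightarrow> 'v \<Rightarrow> 'v \<Rightarrow> bool" where
  "connected_in F u v \<longleftrightarrow> (u, v) \<in> (edge_rel F)\<^sup>*"

definition components :: "'v set \<Rightarrow> 'v set set \<Rightarrow> 'v set set" where
  "components V F = {{w \<in> V. connected_in F v w} | v. v \<in> V}"

definition demand_active :: "'v set set \<Rightarrow> 'v set set \<Rightarrow> 'v set \<Rightarrow> bool" where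
  "demand_active D F C \<longleftrightarrow> (\<exists>v\<in>C. \<exists>w. {v, w} \<in> D \<and> \<not> connected_in F v w)"

definition budget_active :: "'v set set \<Rightarrow> 'v set set \<Rightarrow> real \<Rightarrow> 'v set \<Rightarrow> bool" where
  "budget_active D F bC C \<longleftrightarrow> \<not> demand_active D F C \<and> bC > 0"

text \<open>F t: tight edges at time t; y S t: dual of S at time t; b C t: budget of
  component C at time t. active_at: C is in A^t.\<close>
definition active_at ::
  "'v set \<Rightarrow> 'v set set \<Rightarrow> (real \<Rightarrow> 'v set set) \<Rightarrow> ('v set \<Rightarrow> real \<Rightarrow> real) \<Rightarrow> real \<Rightarrow> 'v set \<Rightarrow> bool" where
  "active_at V D F b t C \<longleftrightarrow> C \<in> components V (F t) \<and>
     (demand_active D (F t) C \<or> budget_active D (F t) (b C t) C)"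

definition load :: "'v set \<Rightarrow> 'v set set \<Rightarrow> ('v set \<Rightarrow> real \<Rightarrow> real) \<Rightarrow> 'v set \<Rightarrow> real \<Rightarrow> real" where
  "load V E y e t = (\<Sum>S \<in> {S. S \<subseteq> V \<and> e \<in> delta E S}. y S t)"

definition budget_rate ::
  "'v set set \<Rightarrow> real \<Rightarrow> 'v set set \<Rightarrow> real \<Rightarrow> 'v set \<Rightarrow> real" where
  "budget_rate D \<epsilon> Ft bC C =
     (if demand_active D Ft C then \<epsilon> else if bC > 0 then -1 else 0)"

text \<open>(F, y, b) is the (time-continuous) run of the epsilon-extended moat-growing
  algorithm on (V,E,c,D), for times t \<ge> 0. Edges tight at time t are in F t
  (right-continuous convention); the budget of a component at time t>0 is the
  sum of the left limits of the budgets of the components it was merged from.\<close>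
definition moat_run ::
  "'v set \<Rightarrow> 'v set set \<Rightarrow> ('v set \<Rightarrow> real) \<Rightarrow> 'v set set \<Rightarrow> real \<Rightarrow>
   (real \<Rightarrow> 'v set set) \<Rightarrow> ('v set \<Rightarrow> real \<Rightarrow> real) \<Rightarrow> ('v set \<Rightarrow> real \<Rightarrow> real) \<Rightarrow> bool" where
  "moat_run V E c D \<epsilon> F y b \<longleftrightarrow>
     (\<forall>t\<ge>0. F t = {e \<in> E. c e \<le> load V E y e t}) \<and>
     (\<forall>S. y S 0 = 0 \<and> continuous_on {0..} (y S) \<and>
        (\<forall>t\<ge>0. (y S has_real_derivative (if active_at V D F b t S then 1 else 0)) (at_right t))) \<and>
     (\<forall>C \<in> components V (F 0). b C 0 = 0) \<and>
     (\<forall>t>0. \<forall>C \<in> components V (F t).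
        ((\<lambda>s. \<Sum>C' \<in> {C' \<in> components V (\<Union>s'\<in>{0..<t}. F s'). C' \<subseteq> C}. b C' s)
           \<longlongrightarrow> b C t) (at_left t)) \<and>
     (\<forall>t\<ge>0. \<forall>C \<in> components V (F t).
        (b C has_real_derivative budget_rate D \<epsilon> (F t) (b C t) C) (at_right t))"

definition y_final :: "('v set \<Rightarrow> real \<Rightarrow> real) \<Rightarrow> 'v set \<Rightarrow> real" where
  "y_final y S = Lim at_top (y S)"

definition autarkic_pair ::
  "'v set \<Rightarrow> 'v set set \<Rightarrow> (real \<Rightarrow> 'v set set) \<Rightarrow> ('v set \<Rightarrow> real \<Rightarrow> real) \<Rightarrow>
   ('v set \<Rightarrow> real \<Rightarrow> real) \<Rightarrow> 'v set set \<Rightarrow> bool" where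
  "autarkic_pair V D F y b P \<longleftrightarrow> (\<exists>A B. P = {A, B} \<and>
     y_final y A > 0 \<and> y_final y B > 0 \<and> A \<inter> B = {} \<and>
     (\<exists>t\<ge>0. active_at V D F b t A \<and> active_at V D F b t B) \<and>
     sep D A = sep D B \<and> sep D A \<noteq> {})"

definition autarkic_triple ::
  "'v set \<Rightarrow> 'v set set \<Rightarrow> (real \<Rightarrow> 'v set set) \<Rightarrow> ('v set \<Rightarrow> real \<Rightarrow> real) \<Rightarrow>
   'v set set \<Rightarrow> bool" where
  "autarkic_triple V D F b P \<longleftrightarrow> (\<exists>A1 A2 A3. P = {A1, A2, A3} \<and>
     A1 \<inter> A2 = {} \<and> A1 \<inter> A3 = {} \<and> A2 \<inter> A3 = {} \<and>
     (\<exists>t\<ge>0. active_at V D F b t A1 \<and> active_at V D F b t A2 \<and> active_at V D F b t A3) \<and>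
     sep D A1 \<noteq> {} \<and> sep D A2 \<noteq> {} \<and> sep D A3 \<noteq> {} \<and>
     sep D (A1 \<union> A2 \<union> A3) = {})"

definition autarkic_tuple ::
  "'v set \<Rightarrow> 'v set set \<Rightarrow> (real \<Rightarrow> 'v set set) \<Rightarrow> ('v set \<Rightarrow> real \<Rightarrow> real) \<Rightarrow>
   ('v set \<Rightarrow> real \<Rightarrow> real) \<Rightarrow> 'v set set \<Rightarrow> bool" where
  "autarkic_tuple V D F y b P \<longleftrightarrow> autarkic_pair V D F y b P \<or> autarkic_triple V D F b P"

text \<open>sep of a tuple: union of sep of its members (for a pair, sep A = sep B, so this
  is sep A; for a triple it is the union by definition).\<close>
definition sep_tuple :: "'v set set \<Rightarrow> 'v set set \<Rightarrow> 'v set set" where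
  "sep_tuple D P = (\<Union>A \<in> P. sep D A)"

definition tuple_le :: "'v set set \<Rightarrow> 'v set set \<Rightarrow> bool" where
  "tuple_le P Q \<longleftrightarrow> (\<forall>A \<in> P. \<exists>B \<in> Q. A \<subseteq> B)"

end

theory Submission
  imports Defs
begin

text \<open>Only the inclusions and the pairwise disjointness of the members of P3 matter.
  Take a demand pair S separated by A \<in> P1 and by some member of P3, and let
  A \<subseteq> B \<subseteq> C with B \<in> P2 and C \<in> P3. If B did not separate S, then S, which meets A \<subseteq> B,
  would lie inside B \<subseteq> C; but a set contained in one member of a pairwise disjoint
  family is separated by no member of that family.\<close>

lemma subset_if_not_separates:
  assumes "S \<inter> U \<noteq> {}" and "\<not> separates U S"
  shows "S \<subseteq> U"
  using assms unfolding separates_def by blast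

lemma not_in_sep_tuple_if_subset_member:
  assumes "pairwise disjnt R" and "C \<in> R" and "S \<subseteq> C"
  shows "S \<notin> sep_tuple D R"
proof
  assume "S \<in> sep_tuple D R"
  then obtain C' where "C' \<in> R" and "separates C' S"
    unfolding sep_tuple_def sep_def by blast
  moreover from this have "C' = C \<or> disjnt C' C"
    using assms(1,2) by (auto simp: pairwise_def)
  ultimately show False
    using assms(3) unfolding separates_def disjnt_def by blast
qed

lemma sep_tuple_intermediate:
  assumes "pairwise disjnt R" and "tuple_le P Q" and "tuple_le Q R"
    and "S \<in> sep_tuple D P" and "S \<in> sep_tuple D R"
  shows "S \<in> sep_tuple D Q"
proof -
  obtain A where "A \<in> P" and S_sep_A: "S \<in> sep D A"
    using assms(4) unfolding sep_tuple_def by blast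
  then obtain B where "B \<in> Q" and "A \<subseteq> B"
    using assms(2) unfolding tuple_le_def by blast
  then obtain C where "C \<in> R" and "B \<subseteq> C"
    using assms(3) unfolding tuple_le_def by blast
  have "S \<in> sep D B"
  proof (rule ccontr)
    assume "S \<notin> sep D B"
    moreover have "S \<in> D" and "S \<inter> B \<noteq> {}"
      using S_sep_A \<open>A \<subseteq> B\<close> unfolding sep_def separates_def by auto
    ultimately have "S \<subseteq> B"
      by (intro subset_if_not_separates) (auto simp: sep_def)
    then have "S \<subseteq> C"
      using \<open>B \<subseteq> C\<close> by (rule order_trans)
    with assms(1) \<open>C \<in> R\<close> have "S \<notin> sep_tuple D R"
      by (rule not_in_sep_tuple_if_subset_member)
    with assms(5) show False by contradiction
  qed
  with \<open>B \<in> Q\<close> show ?thesis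
    unfolding sep_tuple_def by blast
qed

lemma autarkic_tuple_pairwise_disjnt:
  assumes "autarkic_tuple V D F y b P"
  shows "pairwise disjnt P"
  using assms unfolding autarkic_tuple_def
proof
  assume "autarkic_pair V D F y b P"
  then obtain A B where "P = {A, B}" and "A \<inter> B = {}"
    unfolding autarkic_pair_def by auto
  then show ?thesis
    by (auto simp: pairwise_insert disjnt_def Int_commute)
next
  assume "autarkic_triple V D F b P"
  then obtain A1 A2 A3 where "P = {A1, A2, A3}"
    and "A1 \<inter> A2 = {}" and "A1 \<inter> A3 = {}" and "A2 \<inter> A3 = {}"
    unfolding autarkic_triple_def by auto
  then show ?thesis
    by (auto simp: pairwise_insert disjnt_def Int_commute)
qed

theorem lemma4p11:
  fixes V :: "'v set" and E D :: "'v set set" and c :: "'v set \<Rightarrow> real" and \<epsilon> :: real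
    and F :: "real \<Rightarrow> 'v set set" and y b :: "'v set \<Rightarrow> real \<Rightarrow> real"
    and P1 P2 P3 :: "'v set set"
  assumes "finite V"
    and "\<forall>e \<in> E. \<exists>u v. u \<noteq> v \<and> u \<in> V \<and> v \<in> V \<and> e = {u, v}"
    and "\<forall>e \<in> E. c e \<ge> 0"
    and "\<forall>S \<in> D. \<exists>a b. a \<in> V \<and> b \<in> V \<and> S = {a, b}"
    and "\<epsilon> \<ge> 0"
    and "moat_run V E c D \<epsilon> F y b"
    and "autarkic_tuple V D F y b P1"
    and "autarkic_tuple V D F y b P2"
    and "autarkic_tuple V D F y b P3"
    and "tuple_le P1 P2" and "tuple_le P2 P3"
    and "sep_tuple D P1 \<inter> sep_tuple D P3 \<noteq> {}"
  shows "sep_tuple D P2 \<inter> sep_tuple D P3 \<noteq> {}"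
proof -
  obtain S where "S \<in> sep_tuple D P1" and "S \<in> sep_tuple D P3"
    using assms(12) by blast
  moreover have "pairwise disjnt P3"
    using assms(9) by (rule autarkic_tuple_pairwise_disjnt)
  ultimately have "S \<in> sep_tuple D P2"
    using sep_tuple_intermediate assms(10,11) by blast
  with \<open>S \<in> sep_tuple D P3\<close> show ?thesis
    by blast
qed

end
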